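(* Let $\ell$ be a positive integer and $n$ an integer such that $a:=n/\ell\in\mathbb Z$ and $n\ell+\ell^2>0$. Let $\xi_\ell=e^{2\pi i/\ell}$ and $I=\mathbb Z\cap[n,n+\ell-1]$. For parameters $(N,L)$ with $L\in\mathbb Z_{>0}$, $N\in\mathbb Z$, $A:=N/L\in\mathbb Z$, $NL+L^2>0$ (this will be used for $(N,L)=(n,\ell)$ and $(N,L)=(a,1)$), define for $n'\in\mathbb R$, $\ell'\in\mathbb Z$ $$\chi_{\mathsf A^{N,L}_{n',\ell'}}(u,v;\tau)=-i\,\frac{\theta_1(u;\tau)}{\eta(\tau)^3}\sum_{m\in\mathbb Z}\frac{(-1)^{k}e^{2\pi i v k}\,e^{2\pi i u(Ak+n'+\frac12)}\,e^{\pi i\tau k(k(2A+1)+2n'+1)}}{1-e^{2\pi i(u+k\tau)}},\qquad k=mL+\ell',$$ and for $n',e'\in\mathbb C$ $$\chi_{\mathsf T^{N,L}_{n',e'}}(u,v;\tau)=i(-1)^{\lfloor e'\rfloor}\frac{\theta_1(u;\tau)}{\eta(\tau)^3}\sum_{m\in\mathbb Z}(-1)^{mL}e^{2\pi i v(e'+mL)}e^{2\pi i u(n'+mN)}e^{2\pi i\tau\left(n'e'+\frac{e'^2}{2}+\frac{m^2}{2}(2NL+L^2)+m(Ne'+n'L+Le')\right)},$$ with $\lfloor e'\rfloor$ the largest integer $\le\operatorname{Re}e'$. Then for all $n'\in\mathbb R$ and $t\in\mathbb Z$, $$\chi_{\mathsf A^{n,\ell}_{n',t}}(u,v;\tau)=\frac1\ell\sum_{s\in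 I}\xi_\ell^{-ts}\chi_{\mathsf A^{a,1}_{n',0}}\Big(u,v+\frac s\ell;\tau\Big),\qquad \chi_{\mathsf A^{a,1}_{n',0}}\Big(u,v+\frac t\ell;\tau\Big)=\sum_{s\in I}\xi_\ell^{ts}\chi_{\mathsf A^{n,\ell}_{n',s}}(u,v;\tau),$$ and for all $n',e'\in\mathbb C$ and $s,t\in\mathbb Z$, $$\chi_{\mathsf T^{n,\ell}_{n'+tn/\ell,\,e'+t}}(u,v;\tau)=\frac1\ell\sum_{s\in I}\xi_\ell^{-st}e^{-2\pi i e's/\ell}\chi_{\mathsf T^{a,1}_{n',e'}}\Big(u,v+\frac s\ell;\tau\Big),$$ $$\chi_{\mathsf T^{a,1}_{n',e'}}\Big(u,v+\frac s\ell;\tau\Big)=e^{2\pi i e's/\ell}\sum_{t\in I}\xi_\ell^{st}\chi_{\mathsf T^{n,\ell}_{n'+tn/\ell,\,e'+t}}(u,v;\tau),$$ for all $u,v\in\mathbb C$, $\tau\in\mathbb H$ for which the atypical series are defined.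
   Context: $\theta_1(u;\tau)=-i\sum_{n\in\mathbb Z}(-1)^n e^{\pi i(n+\frac12)^2\tau+2\pi i u(n+\frac12)}$ and $\eta(\tau)=e^{\pi i\tau/12}\prod_{j\ge1}(1-e^{2\pi i j\tau})$. The functions $\chi_{\mathsf A}$, $\chi_{\mathsf T}$ are characters of atypical, respectively typical, modules of W-superalgebras extending $\widehat{\mathfrak{gl}}(1|1)$; $\mathsf A^{a,1}$, $\mathsf T^{a,1}$ are the case $(N,L)=(a,1)$. *)

theory Defs
  imports "HOL-Analysis.Analysis"
begin

definition theta1 :: "complex \<Rightarrow> complex \<Rightarrow> complex" where
  "theta1 u \<tau> = - \<i> * (\<Sum>\<^sub>\<infinity>n::int. (-1) powi n *
      exp (pi * \<i> * (of_int n + 1/2)^2 * \<tau> + 2 * pi * \<i> * u * (of_int n + 1/2)))"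

definition eta :: "complex \<Rightarrow> complex" where
  "eta \<tau> = exp (pi * \<i> * \<tau> / 12) * (\<Prod>i. (1 - exp (2 * pi * \<i> * of_nat (Suc i) * \<tau>)))"

text \<open>Summand (index k = m L + l') of the character of the atypical module A^{N,L}; A = N/L assumed integral.\<close>
definition chiA_term :: "int \<Rightarrow> int \<Rightarrow> real \<Rightarrow> int \<Rightarrow> complex \<Rightarrow> complex \<Rightarrow> complex \<Rightarrow> complex" where
  "chiA_term N L n' k u v \<tau> =
     (let A = (of_int (N div L) :: complex); kc = (of_int k :: complex) in
          (-1) powi k * exp (2 * pi * \<i> * v * kc)
          * exp (2 * pi * \<i> * u * (A * kc + of_real n' + 1/2))
          * exp (pi * \<i> * \<tau> * kc * (kc * (2 * A + 1) + 2 * of_real n' + 1))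
          / (1 - exp (2 * pi * \<i> * (u + kc * \<tau>))))"

definition chiA :: "int \<Rightarrow> int \<Rightarrow> real \<Rightarrow> int \<Rightarrow> complex \<Rightarrow> complex \<Rightarrow> complex \<Rightarrow> complex" where
  "chiA N L n' l' u v \<tau> =
      - \<i> * theta1 u \<tau> / (eta \<tau>)^3 *
      (\<Sum>\<^sub>\<infinity>m::int. chiA_term N L n' (m * L + l') u v \<tau>)"

definition chiT :: "int \<Rightarrow> int \<Rightarrow> complex \<Rightarrow> complex \<Rightarrow> complex \<Rightarrow> complex \<Rightarrow> complex \<Rightarrow> complex" where
  "chiT N L n' e' u v \<tau> =
     \<i> * (-1) powi \<lfloor>Re e'\<rfloor> * theta1 u \<tau> / (eta \<tau>)^3 *
     (\<Sum>\<^sub>\<infinity>m::int. (-1) powi (m * L)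
        * exp (2 * pi * \<i> * v * (e' + of_int (m * L)))
        * exp (2 * pi * \<i> * u * (n' + of_int (m * N)))
        * exp (2 * pi * \<i> * \<tau> * (n' * e' + e'^2 / 2
              + (of_int m)^2 / 2 * of_int (2 * N * L + L^2)
              + of_int m * (of_int N * e' + n' * of_int L + of_int L * e'))))"

definition xi :: "int \<Rightarrow> complex" where
  "xi l = exp (2 * pi * \<i> / of_int l)"

end

theory Submission
  imports Defs
begin

(* Both families of identities are finite Fourier inversions on Z/l. For (N, L) = (n, l) the
   character sums the summands of the (a, 1) character over the residue class k = m l + t, and
   the shift v -> v + s/l multiplies the k-th summand of the (a, 1) character by xi_l^(k s)
   (for typical modules also by a factor independent of k). The orthogonality relation
   sum_{s in I} xi_l^(j s) = l [l | j] therefore isolates one residue class. Exchanging the finite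
   sum over I with the series is legitimate because the Gaussian factor exp(pi i tau (2a+1) k^2)
   makes every series involved absolutely summable. *)

lemma xi_nonzero [simp]: "xi l \<noteq> 0"
  by (simp add: xi_def)

lemma norm_xi_powi [simp]: "norm (xi l powi m) = 1"
  by (simp add: xi_def norm_power_int)

lemma xi_powi: "l \<noteq> 0 \<Longrightarrow> xi l powi m = exp (2 * pi * \<i> * of_int m / of_int l)"
  unfolding xi_def exp_power_int by (simp add: field_simps)

lemma exp_eq_xi_powi:
  "l \<noteq> 0 \<Longrightarrow> exp (2 * pi * \<i> * (of_int s / of_int l) * of_int k) = xi l powi (k * s)"
  by (simp add: xi_powi field_simps)

lemma xi_powi_mod:
  assumes "l \<noteq> 0" "i mod l = j mod l"
  shows "xi l powi i = xi l powi j"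
proof -
  from assms(2) have "l dvd i - j"
    by (simp add: mod_eq_dvd_iff)
  then obtain q where "i = j + l * q"
    by (auto simp: dvd_def algebra_simps)
  moreover have "xi l powi l = 1"
    using assms(1) by (simp add: xi_powi)
  ultimately show ?thesis
    by (simp add: power_int_add power_int_mult)
qed

lemma xi_powi_eq_1_iff:
  assumes "l > 0"
  shows "xi l powi m = 1 \<longleftrightarrow> l dvd m"
proof
  assume "xi l powi m = 1"
  then have "exp (2 * pi * \<i> * of_int m / of_int l) = 1"
    using assms by (simp add: xi_powi)
  then obtain q :: int where "Im (2 * pi * \<i> * of_int m / of_int l) = of_int (2 * q) * pi"
    unfolding exp_eq_1 by blast
  then have "real_of_int m = of_int (q * l)"
    using assms by (simp add: field_simps)
  then show "l dvd m"
    by (simp only: of_int_eq_iff) simp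
next
  assume "l dvd m"
  then show "xi l powi m = 1"
    using xi_powi_mod[of l m 0] assms by simp
qed

lemma sum_power_int_block:
  fixes w :: "'a :: field"
  assumes "w \<noteq> 0"
  shows "(w - 1) * (\<Sum>s\<in>{n..n + int p - 1}. w powi s) = w powi (n + int p) - w powi n"
proof (induction p)
  case 0
  then show ?case by simp
next
  case (Suc p)
  have "{n..n + int (Suc p) - 1} = insert (n + int p) {n..n + int p - 1}"
    by auto
  then show ?case
    using Suc assms by (simp add: algebra_simps power_int_add)
qed

lemma sum_xi_powi_block:
  assumes "l > 0"
  shows "(\<Sum>s\<in>{n..n + l - 1}. xi l powi (j * s)) = (if l dvd j then of_int l else 0)"
proof (cases "l dvd j")
  case True
  then have "xi l powi (j * s) = 1" for s
    using assms by (simp add: xi_powi_eq_1_iff)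
  then show ?thesis
    using True assms by simp
next
  case False
  define w where "w = xi l powi j"
  have "w \<noteq> 0" "w \<noteq> 1"
    using False assms xi_powi_eq_1_iff by (auto simp: w_def)
  have "w powi l = 1"
    using assms xi_powi_eq_1_iff[of l "j * l"] by (simp add: w_def power_int_mult)
  then have "(w - 1) * (\<Sum>s\<in>{n..n + l - 1}. w powi s) = 0"
    using sum_power_int_block[OF \<open>w \<noteq> 0\<close>, of n "nat l"] assms \<open>w \<noteq> 0\<close>
    by (simp add: power_int_add)
  then show ?thesis
    using False \<open>w \<noteq> 1\<close> by (simp add: w_def power_int_mult)
qed

lemma summable_on_norm_le:
  fixes f g :: "'a \<Rightarrow> complex"
  assumes "f summable_on A" and "\<And>x. x \<in> A \<Longrightarrow> norm (g x) \<le> norm (f x)"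
  shows "g summable_on A"
proof -
  have "(\<lambda>x. norm (f x)) summable_on A"
    using assms(1) by (simp only: summable_on_iff_abs_summable_on_complex)
  then have "(\<lambda>x. norm (g x)) summable_on A"
    using assms(2) by (rule Infinite_Sum.abs_summable_on_comparison_test)
  then show ?thesis
    by (simp only: summable_on_iff_abs_summable_on_complex)
qed

lemma has_sum_sum:
  fixes f :: "'i \<Rightarrow> 'a \<Rightarrow> 'b :: topological_comm_monoid_add"
  assumes "finite S" and "\<And>s. s \<in> S \<Longrightarrow> (f s has_sum c s) A"
  shows "((\<lambda>x. \<Sum>s\<in>S. f s x) has_sum (\<Sum>s\<in>S. c s)) A"
  using assms by (induction S rule: finite_induct) (simp_all add: has_sum_add)

lemma infsum_sum:
  fixes f :: "'i \<Rightarrow> 'a \<Rightarrow> 'b :: {topological_comm_monoid_add, t2_space}"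
  assumes "finite S" and "\<And>s. s \<in> S \<Longrightarrow> f s summable_on A"
  shows "(\<Sum>\<^sub>\<infinity>x\<in>A. \<Sum>s\<in>S. f s x) = (\<Sum>s\<in>S. \<Sum>\<^sub>\<infinity>x\<in>A. f s x)"
  by (intro infsumI has_sum_sum) (simp_all add: assms)

lemma infsum_residue_class:
  fixes g :: "int \<Rightarrow> 'a :: {comm_monoid_add, t2_space}"
  assumes "l > 0"
  shows "(\<Sum>\<^sub>\<infinity>m. g (m * l + t)) = (\<Sum>\<^sub>\<infinity>k. if k mod l = t mod l then g k else 0)"
proof -
  have "inj (\<lambda>m. m * l + t)"
    using assms by (auto simp: inj_on_def)
  then have "(\<Sum>\<^sub>\<infinity>m. g (m * l + t)) = infsum g (range (\<lambda>m. m * l + t))"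
    by (simp add: infsum_reindex comp_def)
  moreover have "range (\<lambda>m. m * l + t) = {k. k mod l = t mod l}"
  proof (intro set_eqI iffI)
    fix k assume "k \<in> {k. k mod l = t mod l}"
    then obtain q where "k - t = l * q"
      by (auto simp: mod_eq_dvd_iff)
    then show "k \<in> range (\<lambda>m. m * l + t)"
      by (intro image_eqI[of _ _ q]) (simp_all add: algebra_simps)
  qed auto
  moreover have "infsum g {k. k mod l = t mod l} = (\<Sum>\<^sub>\<infinity>k. if k mod l = t mod l then g k else 0)"
    by (rule infsum_cong_neutral) auto
  ultimately show ?thesis
    by simp
qed

lemma sum_block_if_mod_eq:
  fixes k n l :: int
  assumes "l > 0"
  shows "(\<Sum>t\<in>{n..n + l - 1}. if k mod l = t mod l then g t else 0) = g (n + (k - n) mod l)"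
proof -
  let ?t0 = "n + (k - n) mod l"
  have "t = ?t0" if "t \<in> {n..n + l - 1}" "k mod l = t mod l" for t
  proof -
    have "(t - n) mod l = (k - n) mod l"
      using that(2) mod_diff_left_eq[of t l n] mod_diff_left_eq[of k l n] by simp
    moreover have "(t - n) mod l = t - n"
      using that(1) by (intro mod_pos_pos_trivial) auto
    ultimately show ?thesis by simp
  qed
  moreover have "?t0 \<in> {n..n + l - 1}" "k mod l = ?t0 mod l"
    using assms pos_mod_bound[of l "k - n"] by (simp_all add: mod_add_right_eq)
  ultimately have "(\<Sum>t\<in>{n..n + l - 1}. if k mod l = t mod l then g t else 0)
      = (\<Sum>t\<in>{n..n + l - 1}. if t = ?t0 then g t else 0)"
    by (intro sum.cong) auto
  also have "\<dots> = g ?t0"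
    using \<open>?t0 \<in> {n..n + l - 1}\<close> by simp
  finally show ?thesis .
qed

lemma infsum_residue_class_fourier:
  fixes g :: "int \<Rightarrow> complex"
  assumes "l > 0" and "g summable_on UNIV"
  shows "(\<Sum>\<^sub>\<infinity>m. g (m * l + t))
    = 1 / of_int l * (\<Sum>s\<in>{n..n + l - 1}. xi l powi (- t * s) * (\<Sum>\<^sub>\<infinity>k. xi l powi (k * s) * g k))"
proof -
  have twisted: "(\<lambda>k. xi l powi (j k) * g k) summable_on UNIV" for j
    using assms(2) by (rule summable_on_norm_le) (simp add: norm_mult)
  have "(\<Sum>s\<in>{n..n + l - 1}. xi l powi (- t * s) * (\<Sum>\<^sub>\<infinity>k. xi l powi (k * s) * g k))
      = (\<Sum>s\<in>{n..n + l - 1}. \<Sum>\<^sub>\<infinity>k. xi l powi ((k - t) * s) * g k)"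
  proof (rule sum.cong[OF refl])
    fix s
    have "xi l powi (- t * s) * xi l powi (k * s) = xi l powi ((k - t) * s)" for k
      by (simp add: algebra_simps flip: power_int_add)
    then show "xi l powi (- t * s) * (\<Sum>\<^sub>\<infinity>k. xi l powi (k * s) * g k)
        = (\<Sum>\<^sub>\<infinity>k. xi l powi ((k - t) * s) * g k)"
      by (simp flip: infsum_cmult_right' mult.assoc)
  qed
  also have "\<dots> = (\<Sum>\<^sub>\<infinity>k. \<Sum>s\<in>{n..n + l - 1}. xi l powi ((k - t) * s) * g k)"
    by (rule infsum_sum[symmetric]) (simp_all add: twisted)
  also have "\<dots> = (\<Sum>\<^sub>\<infinity>k. of_int l * (if k mod l = t mod l then g k else 0))"
    by (intro infsum_cong) (simp add: sum_xi_powi_block[OF assms(1)] mod_eq_dvd_iff flip: sum_distrib_right)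
  also have "\<dots> = of_int l * (\<Sum>\<^sub>\<infinity>m. g (m * l + t))"
    by (simp add: infsum_cmult_right' infsum_residue_class[OF assms(1)])
  finally show ?thesis
    using assms(1) by simp
qed

lemma infsum_twisted_fourier:
  fixes g :: "int \<Rightarrow> complex"
  assumes "l > 0" and "g summable_on UNIV"
  shows "(\<Sum>\<^sub>\<infinity>k. xi l powi (k * s) * g k)
    = (\<Sum>t\<in>{n..n + l - 1}. xi l powi (s * t) * (\<Sum>\<^sub>\<infinity>m. g (m * l + t)))"
proof -
  have restricted: "(\<lambda>k. if k mod l = t mod l then xi l powi (s * t) * g k else 0) summable_on UNIV" for t
    using assms(2) by (rule summable_on_norm_le) (simp add: norm_mult)
  have "(\<Sum>t\<in>{n..n + l - 1}. xi l powi (s * t) * (\<Sum>\<^sub>\<infinity>m. g (m * l + t)))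
      = (\<Sum>t\<in>{n..n + l - 1}. \<Sum>\<^sub>\<infinity>k. if k mod l = t mod l then xi l powi (s * t) * g k else 0)"
    unfolding infsum_residue_class[OF assms(1)] infsum_cmult_right'[symmetric]
    by (intro sum.cong infsum_cong) simp_all
  also have "\<dots> = (\<Sum>\<^sub>\<infinity>k. \<Sum>t\<in>{n..n + l - 1}. if k mod l = t mod l then xi l powi (s * t) * g k else 0)"
    by (rule infsum_sum[symmetric]) (simp_all add: restricted)
  also have "\<dots> = (\<Sum>\<^sub>\<infinity>k. xi l powi (k * s) * g k)"
  proof (rule infsum_cong)
    fix k
    have "(n + (k - n) mod l) mod l = k mod l"
      by (simp add: mod_add_right_eq)
    then have "(s * (n + (k - n) mod l)) mod l = (k * s) mod l"
      by (subst mult.commute, intro mod_mult_cong) simp_all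
    then have "xi l powi (s * (n + (k - n) mod l)) = xi l powi (k * s)"
      using assms(1) by (intro xi_powi_mod) simp_all
    then show "(\<Sum>t\<in>{n..n + l - 1}. if k mod l = t mod l then xi l powi (s * t) * g k else 0)
        = xi l powi (k * s) * g k"
      by (simp add: sum_block_if_mod_eq[OF assms(1)])
  qed
  finally show ?thesis ..
qed

lemma summable_on_int_from_halves:
  fixes f :: "int \<Rightarrow> complex"
  assumes "summable (\<lambda>n. norm (f (int n)))" and "summable (\<lambda>n. norm (f (- int n)))"
  shows "f summable_on UNIV"
proof -
  have "f summable_on range int"
    using norm_summable_imp_summable_on[OF assms(1)] by (simp add: summable_on_reindex comp_def)
  moreover have "f summable_on range (\<lambda>n. - int n)"
    using norm_summable_imp_summable_on[OF assms(2)] by (simp add: summable_on_reindex inj_on_def comp_def)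
  ultimately have "f summable_on (range int \<union> range (\<lambda>n. - int n))"
    by (rule summable_on_union)
  moreover have "UNIV = range int \<union> range (\<lambda>n. - int n)"
  proof (rule UNIV_eq_I)
    fix x :: int
    show "x \<in> range int \<union> range (\<lambda>n. - int n)"
    proof (cases "0 \<le> x")
      case True
      then have "x = int (nat x)"
        by simp
      then show ?thesis
        by (intro UnI1 range_eqI)
    next
      case False
      then have "x = - int (nat (- x))"
        by simp
      then show ?thesis
        by (intro UnI2 range_eqI)
    qed
  qed
  ultimately show ?thesis
    by simp
qed

lemma summable_norm_exp_quadratic:
  fixes a b c :: complex
  assumes "Re c < 0"
  shows "summable (\<lambda>n. norm (exp (a + b * of_nat n + c * of_nat n ^ 2)))"
proof (rule summable_comparison_test_ev)
  show "summable (\<lambda>n. exp (Re a) * exp (-1) ^ n)"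
    by (intro summable_mult summable_geometric) simp
  obtain N :: nat where N: "Re b + 1 < real N * - Re c"
    using ex_less_of_nat_mult[of "- Re c" "Re b + 1"] assms by auto
  have "norm (norm (exp (a + b * of_nat n + c * of_nat n ^ 2))) \<le> exp (Re a) * exp (-1) ^ n"
    if "N \<le> n" for n
  proof -
    have "Re b + 1 \<le> real n * - Re c"
      using N mult_right_mono[OF of_nat_mono[OF that], of "- Re c"] assms by linarith
    then have "(Re b + 1) * real n \<le> real n * - Re c * real n"
      by (intro mult_right_mono) auto
    then have "Re b * real n + Re c * real n ^ 2 \<le> - real n"
      by (simp add: power2_eq_square algebra_simps)
    then have "norm (exp (a + b * of_nat n + c * of_nat n ^ 2)) \<le> exp (Re a + - real n)"
      by simp
    also have "\<dots> = exp (Re a) * exp (-1) ^ n"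
      unfolding exp_add by (simp flip: exp_of_nat_mult)
    finally show ?thesis
      by simp
  qed
  then show "\<forall>\<^sub>F n in sequentially. norm (norm (exp (a + b * of_nat n + c * of_nat n ^ 2))) \<le> exp (Re a) * exp (-1) ^ n"
    by (auto simp: eventually_sequentially)
qed

lemma summable_on_int_gaussian_dominated:
  fixes f :: "int \<Rightarrow> complex" and a b c :: complex
  assumes "Re c < 0"
    and "\<forall>\<^sub>F n in sequentially. norm (f (int n)) \<le> B * norm (exp (a + b * of_int (int n) + c * of_int (int n) ^ 2))"
    and "\<forall>\<^sub>F n in sequentially. norm (f (- int n)) \<le> B * norm (exp (a + b * of_int (- int n) + c * of_int (- int n) ^ 2))"
  shows "f summable_on UNIV"
proof (rule summable_on_int_from_halves)
  show "summable (\<lambda>n. norm (f (int n)))"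
    using assms(2)
    by (intro summable_comparison_test_ev[OF _ summable_mult[OF summable_norm_exp_quadratic[OF assms(1)]]])
       simp
  have "summable (\<lambda>n. B * norm (exp (a + (- b) * of_nat n + c * of_nat n ^ 2)))"
    by (intro summable_mult summable_norm_exp_quadratic assms(1))
  then show "summable (\<lambda>n. norm (f (- int n)))"
    by (rule summable_comparison_test_ev[rotated]) (use assms(3) in simp)
qed

lemma norm_one_minus_exp_ge_half:
  fixes w :: complex
  assumes "1 \<le> \<bar>Re w\<bar>"
  shows "1 / 2 \<le> norm (1 - exp w)"
proof -
  have "\<bar>1 - exp (Re w)\<bar> \<le> norm (1 - exp w)"
    using norm_triangle_ineq3[of 1 "exp w"] by simp
  moreover have "1 / 2 \<le> \<bar>1 - exp (Re w)\<bar>"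
  proof (cases "Re w \<ge> 1")
    case True
    then have "2 \<le> exp (Re w)"
      using exp_ge_add_one_self[of "Re w"] by linarith
    then show ?thesis
      using abs_ge_minus_self[of "1 - exp (Re w)"] by linarith
  next
    case False
    then have "exp (Re w) \<le> exp (-1)"
      using assms by simp
    moreover have "2 * exp (-1) \<le> (1 :: real)"
      using exp_ge_add_one_self[of 1] by (simp add: exp_minus field_simps)
    ultimately have "exp (Re w) \<le> 1 / 2"
      by linarith
    then show ?thesis
      using abs_ge_self[of "1 - exp (Re w)"] by linarith
  qed
  ultimately show ?thesis
    by linarith
qed

lemma chiA_eq_sublattice_sum:
  "chiA N L n' t u v \<tau> = - \<i> * theta1 u \<tau> / (eta \<tau>)^3 * (\<Sum>\<^sub>\<infinity>m. chiA_term (N div L) 1 n' (m * L + t) u v \<tau>)"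
  by (simp only: chiA_def chiA_term_def div_by_1)

lemma chiA_term_shift:
  "chiA_term N L n' k u (v + w) \<tau> = exp (2 * pi * \<i> * w * of_int k) * chiA_term N L n' k u v \<tau>"
proof -
  have "exp (2 * pi * \<i> * (v + w) * of_int k) = exp (2 * pi * \<i> * v * of_int k) * exp (2 * pi * \<i> * w * of_int k)"
    by (simp add: algebra_simps flip: exp_add)
  then show ?thesis
    by (simp add: chiA_term_def Let_def mult_ac)
qed

lemma summable_chiA_term:
  assumes "0 \<le> N div L" and "Im \<tau> > 0"
  shows "(\<lambda>k. chiA_term N L n' k u v \<tau>) summable_on UNIV"
proof -
  define A where "A = N div L"
  define c0 where "c0 = 2 * pi * \<i> * u * (of_real n' + 1/2)"
  define c1 where "c1 = 2 * pi * \<i> * v + 2 * pi * \<i> * u * of_int A + pi * \<i> * \<tau> * (2 * of_real n' + 1)"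
  define c2 where "c2 = pi * \<i> * \<tau> * (2 * of_int A + 1)"
  define D where "D k = 1 - exp (2 * pi * \<i> * (u + of_int k * \<tau>))" for k :: int
  have "chiA_term N L n' k u v \<tau> = (-1) powi k * exp (c0 + c1 * of_int k + c2 * of_int k ^ 2) / D k" for k
  proof -
    have "exp (2 * pi * \<i> * v * of_int k) * exp (2 * pi * \<i> * u * (of_int A * of_int k + of_real n' + 1/2))
        * exp (pi * \<i> * \<tau> * of_int k * (of_int k * (2 * of_int A + 1) + 2 * of_real n' + 1))
        = exp (c0 + c1 * of_int k + c2 * of_int k ^ 2)"
      by (simp add: c0_def c1_def c2_def algebra_simps power2_eq_square flip: exp_add)
    then show ?thesis
      by (simp add: chiA_term_def Let_def D_def A_def mult_ac)
  qed
  then have norm_term: "norm (chiA_term N L n' k u v \<tau>) = norm (exp (c0 + c1 * of_int k + c2 * of_int k ^ 2)) / norm (D k)" for k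
    by (simp add: norm_mult norm_divide norm_power_int)
  obtain M :: nat where M: "(1 + \<bar>Im u\<bar>) / Im \<tau> \<le> real M"
    using real_arch_simple by blast
  have bound: "norm (chiA_term N L n' k u v \<tau>) \<le> 2 * norm (exp (c0 + c1 * of_int k + c2 * of_int k ^ 2))"
    if "M \<le> \<bar>k\<bar>" for k
  proof -
    have "real M \<le> \<bar>of_int k\<bar>"
      using that of_int_le_iff[of "int M" "\<bar>k\<bar>", where 'a = real] by simp
    then have "real M * Im \<tau> \<le> \<bar>of_int k\<bar> * Im \<tau>"
      using assms(2) by (intro mult_right_mono) auto
    moreover have "1 + \<bar>Im u\<bar> \<le> real M * Im \<tau>"
      using M assms(2) by (simp add: pos_divide_le_eq)
    ultimately have "1 + \<bar>Im u\<bar> \<le> \<bar>of_int k\<bar> * Im \<tau>"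
      by linarith
    then have "1 \<le> \<bar>Im u + of_int k * Im \<tau>\<bar>"
      using assms(2) by (simp add: abs_mult)
    then have "1 \<le> 2 * pi * \<bar>Im u + of_int k * Im \<tau>\<bar>"
      using pi_ge_two mult_mono[of 1 "2 * pi" 1 "\<bar>Im u + of_int k * Im \<tau>\<bar>"] by simp
    then have "1 \<le> \<bar>Re (2 * pi * \<i> * (u + of_int k * \<tau>))\<bar>"
      by (simp add: abs_mult)
    then have "1 / 2 \<le> norm (D k)"
      unfolding D_def by (rule norm_one_minus_exp_ge_half)
    then show ?thesis
      unfolding norm_term by (simp add: divide_le_eq mult.commute)
  qed
  have "Re c2 < 0"
    using assms by (simp add: c2_def A_def add_pos_nonneg)
  moreover have "\<forall>\<^sub>F n in sequentially.
      norm (chiA_term N L n' (int n) u v \<tau>) \<le> 2 * norm (exp (c0 + c1 * of_int (int n) + c2 * of_int (int n) ^ 2))"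
    by (intro eventually_sequentiallyI[of M] bound) simp
  moreover have "\<forall>\<^sub>F n in sequentially.
      norm (chiA_term N L n' (- int n) u v \<tau>) \<le> 2 * norm (exp (c0 + c1 * of_int (- int n) + c2 * of_int (- int n) ^ 2))"
    by (intro eventually_sequentiallyI[of M] bound) simp
  ultimately show ?thesis
    by (rule summable_on_int_gaussian_dominated)
qed

definition chiT_term :: "int \<Rightarrow> int \<Rightarrow> complex \<Rightarrow> complex \<Rightarrow> int \<Rightarrow> complex \<Rightarrow> complex \<Rightarrow> complex \<Rightarrow> complex" where
  "chiT_term N L n' e' m u v \<tau> = (-1) powi (m * L)
     * exp (2 * pi * \<i> * v * (e' + of_int (m * L)))
     * exp (2 * pi * \<i> * u * (n' + of_int (m * N)))
     * exp (2 * pi * \<i> * \<tau> * (n' * e' + e'^2 / 2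
           + (of_int m)^2 / 2 * of_int (2 * N * L + L^2)
           + of_int m * (of_int N * e' + n' * of_int L + of_int L * e')))"

lemma chiT_eq_infsum:
  "chiT N L n' e' u v \<tau> = \<i> * (-1) powi \<lfloor>Re e'\<rfloor> * theta1 u \<tau> / (eta \<tau>)^3 * (\<Sum>\<^sub>\<infinity>m. chiT_term N L n' e' m u v \<tau>)"
  unfolding chiT_def chiT_term_def ..

lemma chiT_term_shift:
  "chiT_term N L n' e' m u (v + w) \<tau> = exp (2 * pi * \<i> * w * (e' + of_int (m * L))) * chiT_term N L n' e' m u v \<tau>"
proof -
  have "exp (2 * pi * \<i> * (v + w) * (e' + of_int (m * L)))
      = exp (2 * pi * \<i> * v * (e' + of_int (m * L))) * exp (2 * pi * \<i> * w * (e' + of_int (m * L)))"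
    by (simp add: algebra_simps flip: exp_add)
  then show ?thesis
    by (simp add: chiT_term_def mult_ac)
qed

lemma chiT_term_sublattice:
  assumes "l \<noteq> 0" and "n = a * l"
  shows "(-1) powi \<lfloor>Re (e' + of_int t)\<rfloor> * chiT_term n l (n' + of_int t * of_int n / of_int l) (e' + of_int t) m u v \<tau>
       = (-1) powi \<lfloor>Re e'\<rfloor> * chiT_term a 1 n' e' (m * l + t) u v \<tau>"
proof -
  have shift: "of_int t * of_int n / of_int l = (of_int t * of_int a :: complex)"
    using assms by simp
  \<comment> \<open>The right-hand sides keep the literal factors \<open>* 1\<close> of \<open>chiT_term a 1\<close>, so that they can be
      folded back into it by unfolding.\<close>
  have sign: "(-1 :: complex) powi \<lfloor>Re (e' + of_int t)\<rfloor> * (-1) powi (m * l)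
      = (-1) powi \<lfloor>Re e'\<rfloor> * (-1) powi ((m * l + t) * 1)"
    by (simp add: power_int_add mult_ac)
  have v_exp: "exp (2 * pi * \<i> * v * (e' + of_int t + of_int (m * l)))
      = exp (2 * pi * \<i> * v * (e' + of_int ((m * l + t) * 1)))"
    by (simp add: algebra_simps)
  have u_exp: "exp (2 * pi * \<i> * u * (n' + of_int t * of_int a + of_int (m * n)))
      = exp (2 * pi * \<i> * u * (n' + of_int ((m * l + t) * a)))"
    by (simp add: assms(2) algebra_simps)
  have tau_exp: "exp (2 * pi * \<i> * \<tau> * ((n' + of_int t * of_int a) * (e' + of_int t) + (e' + of_int t)^2 / 2
        + (of_int m)^2 / 2 * of_int (2 * n * l + l^2)
        + of_int m * (of_int n * (e' + of_int t) + (n' + of_int t * of_int a) * of_int l + of_int l * (e' + of_int t))))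
      = exp (2 * pi * \<i> * \<tau> * (n' * e' + e'^2 / 2
        + (of_int (m * l + t))^2 / 2 * of_int (2 * a * 1 + 1^2)
        + of_int (m * l + t) * (of_int a * e' + n' * of_int 1 + of_int 1 * e')))"
    by (simp add: assms(2) algebra_simps power2_eq_square divide_simps)
  show ?thesis
    unfolding chiT_term_def shift v_exp[symmetric] u_exp[symmetric] tau_exp[symmetric]
    using sign by (simp add: mult_ac)
qed

lemma summable_chiT_term:
  assumes "0 < 2 * N * L + L^2" and "Im \<tau> > 0"
  shows "(\<lambda>m. chiT_term N L n' e' m u v \<tau>) summable_on UNIV"
proof -
  define c0 where "c0 = 2 * pi * \<i> * v * e' + 2 * pi * \<i> * u * n' + 2 * pi * \<i> * \<tau> * (n' * e' + e'^2 / 2)"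
  define c1 where "c1 = 2 * pi * \<i> * v * of_int L + 2 * pi * \<i> * u * of_int N
    + 2 * pi * \<i> * \<tau> * (of_int N * e' + n' * of_int L + of_int L * e')"
  define c2 where "c2 = pi * \<i> * \<tau> * of_int (2 * N * L + L^2)"
  have "exp (2 * pi * \<i> * v * (e' + of_int (m * L))) * exp (2 * pi * \<i> * u * (n' + of_int (m * N)))
      * exp (2 * pi * \<i> * \<tau> * (n' * e' + e'^2 / 2 + (of_int m)^2 / 2 * of_int (2 * N * L + L^2)
            + of_int m * (of_int N * e' + n' * of_int L + of_int L * e')))
      = exp (c0 + c1 * of_int m + c2 * of_int m ^ 2)" for m
    by (simp add: c0_def c1_def c2_def algebra_simps power2_eq_square flip: exp_add)
  then have bound: "norm (chiT_term N L n' e' m u v \<tau>) \<le> 1 * norm (exp (c0 + c1 * of_int m + c2 * of_int m ^ 2))" for m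
    by (simp add: chiT_term_def norm_mult norm_power_int mult.assoc)
  have "0 < pi * Im \<tau> * real_of_int (2 * N * L + L^2)"
    using assms(2) of_int_0_less_iff[THEN iffD2, OF assms(1)] by (intro mult_pos_pos) simp_all
  then have "Re c2 < 0"
    by (simp add: c2_def)
  then show ?thesis
    by (rule summable_on_int_gaussian_dominated[where B = 1 and a = c0 and b = c1])
       (intro always_eventually allI bound)+
qed

lemma chiA_sublattice_fourier:
  fixes n l t :: int
  assumes "l > 0" and "0 \<le> n div l" and "Im \<tau> > 0"
  shows "chiA n l n' t u v \<tau>
      = 1 / of_int l * (\<Sum>s\<in>{n..n + l - 1}. xi l powi (- t * s) * chiA (n div l) 1 n' 0 u (v + of_int s / of_int l) \<tau>)"
    and "chiA (n div l) 1 n' 0 u (v + of_int t / of_int l) \<tau>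
      = (\<Sum>s\<in>{n..n + l - 1}. xi l powi (t * s) * chiA n l n' s u v \<tau>)"
proof -
  have "l \<noteq> 0"
    using assms(1) by simp
  define F where "F v k = chiA_term (n div l) 1 n' k u v \<tau>" for v k
  define P where "P = - \<i> * theta1 u \<tau> / (eta \<tau>)^3"
  have summable: "F v summable_on UNIV"
    using assms(2,3) unfolding F_def by (intro summable_chiA_term) simp_all
  have sublattice: "chiA n l n' t' u v' \<tau> = P * (\<Sum>\<^sub>\<infinity>m. F v' (m * l + t'))" for t' v'
    unfolding chiA_eq_sublattice_sum P_def F_def ..
  have full: "chiA (n div l) 1 n' 0 u v' \<tau> = P * (\<Sum>\<^sub>\<infinity>k. F v' k)" for v'
    unfolding chiA_eq_sublattice_sum P_def F_def by simp
  have shifted: "(\<Sum>\<^sub>\<infinity>k. F (v + of_int s / of_int l) k) = (\<Sum>\<^sub>\<infinity>k. xi l powi (k * s) * F v k)" for s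
    by (simp only: F_def chiA_term_shift exp_eq_xi_powi[OF \<open>l \<noteq> 0\<close>])
  show "chiA n l n' t u v \<tau>
      = 1 / of_int l * (\<Sum>s\<in>{n..n + l - 1}. xi l powi (- t * s) * chiA (n div l) 1 n' 0 u (v + of_int s / of_int l) \<tau>)"
    unfolding sublattice full shifted infsum_residue_class_fourier[OF assms(1) summable, of t n]
    by (simp add: sum_distrib_left mult_ac)
  show "chiA (n div l) 1 n' 0 u (v + of_int t / of_int l) \<tau>
      = (\<Sum>s\<in>{n..n + l - 1}. xi l powi (t * s) * chiA n l n' s u v \<tau>)"
    unfolding sublattice full shifted infsum_twisted_fourier[OF assms(1) summable, of t n]
    by (simp add: sum_distrib_left mult_ac)
qed

lemma chiT_sublattice_fourier:
  fixes n l a s t :: int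
  assumes "l > 0" and "n = a * l" and "0 \<le> a" and "Im \<tau> > 0"
  shows "chiT n l (n' + of_int t * of_int n / of_int l) (e' + of_int t) u v \<tau>
      = 1 / of_int l * (\<Sum>s\<in>{n..n + l - 1}. xi l powi (- s * t) * exp (- 2 * pi * \<i> * e' * of_int s / of_int l)
                          * chiT a 1 n' e' u (v + of_int s / of_int l) \<tau>)"
    and "chiT a 1 n' e' u (v + of_int s / of_int l) \<tau>
      = exp (2 * pi * \<i> * e' * of_int s / of_int l) *
        (\<Sum>t\<in>{n..n + l - 1}. xi l powi (s * t) * chiT n l (n' + of_int t * of_int n / of_int l) (e' + of_int t) u v \<tau>)"
proof -
  have "l \<noteq> 0"
    using assms(1) by simp
  define F where "F v m = chiT_term a 1 n' e' m u v \<tau>" for v m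
  define P where "P = \<i> * (-1) powi \<lfloor>Re e'\<rfloor> * theta1 u \<tau> / (eta \<tau>)^3"
  define E where "E s = exp (2 * pi * \<i> * e' * of_int s / of_int l)" for s :: int
  have summable: "F v summable_on UNIV"
    using assms(3,4) unfolding F_def by (intro summable_chiT_term) simp_all
  have sublattice: "chiT n l (n' + of_int t' * of_int n / of_int l) (e' + of_int t') u v' \<tau>
      = P * (\<Sum>\<^sub>\<infinity>m. F v' (m * l + t'))" for t' v'
  proof -
    have "chiT n l (n' + of_int t' * of_int n / of_int l) (e' + of_int t') u v' \<tau>
        = \<i> * theta1 u \<tau> / (eta \<tau>)^3 * (\<Sum>\<^sub>\<infinity>m. (-1) powi \<lfloor>Re (e' + of_int t')\<rfloor>
            * chiT_term n l (n' + of_int t' * of_int n / of_int l) (e' + of_int t') m u v' \<tau>)"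
      unfolding chiT_eq_infsum infsum_cmult_right' by (simp add: mult_ac)
    also have "\<dots> = \<i> * theta1 u \<tau> / (eta \<tau>)^3 * (\<Sum>\<^sub>\<infinity>m. (-1) powi \<lfloor>Re e'\<rfloor> * F v' (m * l + t'))"
      by (simp only: F_def chiT_term_sublattice[OF \<open>l \<noteq> 0\<close> assms(2)])
    also have "\<dots> = P * (\<Sum>\<^sub>\<infinity>m. F v' (m * l + t'))"
      unfolding P_def infsum_cmult_right' by (simp add: mult_ac)
    finally show ?thesis .
  qed
  have full: "chiT a 1 n' e' u v' \<tau> = P * (\<Sum>\<^sub>\<infinity>m. F v' m)" for v'
    unfolding chiT_eq_infsum P_def F_def ..
  have shifted: "(\<Sum>\<^sub>\<infinity>m. F (v + of_int s' / of_int l) m) = E s' * (\<Sum>\<^sub>\<infinity>m. xi l powi (m * s') * F v m)" for s'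
  proof -
    have "exp (2 * pi * \<i> * (of_int s' / of_int l) * (e' + of_int (m * 1)))
        = E s' * exp (2 * pi * \<i> * (of_int s' / of_int l) * of_int m)" for m
      by (simp add: E_def algebra_simps add_divide_distrib flip: exp_add)
    then have "F (v + of_int s' / of_int l) m = E s' * xi l powi (m * s') * F v m" for m
      by (simp only: F_def chiT_term_shift exp_eq_xi_powi[OF \<open>l \<noteq> 0\<close>])
    then have "(\<Sum>\<^sub>\<infinity>m. F (v + of_int s' / of_int l) m) = (\<Sum>\<^sub>\<infinity>m. E s' * xi l powi (m * s') * F v m)"
      by (rule infsum_cong)
    then show ?thesis
      by (simp only: mult.assoc infsum_cmult_right')
  qed
  have untwist: "xi l powi (- s' * t) * exp (- 2 * pi * \<i> * e' * of_int s' / of_int l) * (P * (E s' * X))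
      = P * (xi l powi (- t * s') * X)" for s' X
  proof -
    have "exp (- 2 * pi * \<i> * e' * of_int s' / of_int l) * E s' = 1"
      by (simp add: E_def flip: exp_add)
    then show ?thesis
      by (simp add: mult_ac)
  qed
  show "chiT n l (n' + of_int t * of_int n / of_int l) (e' + of_int t) u v \<tau>
      = 1 / of_int l * (\<Sum>s\<in>{n..n + l - 1}. xi l powi (- s * t) * exp (- 2 * pi * \<i> * e' * of_int s / of_int l)
                          * chiT a 1 n' e' u (v + of_int s / of_int l) \<tau>)"
    unfolding sublattice full shifted untwist infsum_residue_class_fourier[OF assms(1) summable, of t n]
    by (simp add: sum_distrib_left mult_ac)
  show "chiT a 1 n' e' u (v + of_int s / of_int l) \<tau>
      = exp (2 * pi * \<i> * e' * of_int s / of_int l) *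
        (\<Sum>t\<in>{n..n + l - 1}. xi l powi (s * t) * chiT n l (n' + of_int t * of_int n / of_int l) (e' + of_int t) u v \<tau>)"
    unfolding sublattice full shifted infsum_twisted_fourier[OF assms(1) summable, of s n]
    by (simp add: E_def sum_distrib_left mult_ac)
qed

theorem mainTheorem5:
  fixes l n :: int
  assumes "l > 0" and "l dvd n" and "n * l + l^2 > 0"
  defines "a \<equiv> n div l"
  defines "I \<equiv> {n .. n + l - 1}"
  shows
   "(\<forall>(n'::real) (t::int) u v \<tau>. Im \<tau> > 0 \<and>
        (\<forall>k::int. exp (2 * pi * \<i> * (u + of_int k * \<tau>)) \<noteq> 1) \<longrightarrow>
      chiA n l n' t u v \<tau>
        = 1 / of_int l * (\<Sum>s\<in>I. xi l powi (- t * s) * chiA a 1 n' 0 u (v + of_int s / of_int l) \<tau>)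
      \<and> chiA a 1 n' 0 u (v + of_int t / of_int l) \<tau>
        = (\<Sum>s\<in>I. xi l powi (t * s) * chiA n l n' s u v \<tau>))
    \<and>
    (\<forall>(n'::complex) (e'::complex) (s::int) (t::int) u v \<tau>. Im \<tau> > 0 \<longrightarrow>
      chiT n l (n' + of_int t * of_int n / of_int l) (e' + of_int t) u v \<tau>
        = 1 / of_int l * (\<Sum>s\<in>I. xi l powi (- s * t) * exp (- 2 * pi * \<i> * e' * of_int s / of_int l)
                            * chiT a 1 n' e' u (v + of_int s / of_int l) \<tau>)
      \<and> chiT a 1 n' e' u (v + of_int s / of_int l) \<tau>
        = exp (2 * pi * \<i> * e' * of_int s / of_int l) *
          (\<Sum>t\<in>I. xi l powi (s * t) * chiT n l (n' + of_int t * of_int n / of_int l) (e' + of_int t) u v \<tau>))"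
proof -
  have n_eq: "n = a * l"
    using assms(2) unfolding a_def by simp
  have "0 < l * (l * (a + 1))"
    using assms(3) unfolding n_eq by (simp add: power2_eq_square algebra_simps)
  then have a_nonneg: "0 \<le> a"
    using assms(1) by (simp add: zero_less_mult_iff)
  note chiA_fourier = chiA_sublattice_fourier[OF assms(1), where n = n, folded a_def, OF a_nonneg]
  note chiT_fourier = chiT_sublattice_fourier[OF assms(1) n_eq a_nonneg]
  show ?thesis
    unfolding I_def
    by (intro conjI allI impI; (elim conjE)?; rule chiA_fourier chiT_fourier; assumption)
qed

end
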